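(* Let $G_{FL}=(\omega^{<\omega},c_{00}(\omega))$ and equip $c_{00}(\omega)$ with the ultrametric $d(R,R')=\frac{1}{\Delta(R,R')+1}$ for $R\neq R'$ and $d(R,R)=0$. The map $\varphi\colon \mathrm{Aut}(G_{FL})\to \mathrm{Iso}(c_{00}(\omega),d)$, $\varphi(f)=\bar f|_{c_{00}(\omega)}$, is a well-defined group isomorphism from the automorphism group of $G_{FL}$ in $\mathbf{Games}_A$ onto the group of surjective isometries of $(c_{00}(\omega),d)$ onto itself.
   Context: $c_{00}(\omega)$ is the set of eventually zero sequences in $\omega^\omega$; for distinct $R,R'\in\omega^\omega$, $\Delta(R,R')=\min\{n<\omega:R(n)\neq R'(n)\}$. A map $f\colon\omega^{<\omega}\to\omega^{<\omega}$ is chronological if $|f(t)|=|t|$ and $f(t\restriction k)=f(t)\restriction k$ for all $t$ and $k\le|t|$ (with $|t|$ the length and $t\restriction k$ the initial segment of length $k$); it induces $\bar f\colon\omega^\omega\to\omega^\omega$ with $\bar f(R)\restriction n=f(R\restriction n)$. An automorphism of $G_{FL}$ in $\mathbf{Games}_A$ is a bijective chronological map $f\colon\omega^{<\omega}\to\omega^{<\omega}$ with $\bar f[c_{00}(\omega)]=c_{00}(\omega)$; the group operation is composition. *)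

theory Defs
  imports Complex_Main "HOL-Algebra.Group" "HOL-Library.FuncSet"
begin

text \<open>omega^omega is nat => nat; omega^{<omega} is nat list.\<close>

definition c00 :: "(nat \<Rightarrow> nat) set" where
  "c00 = {R. finite {n. R n \<noteq> 0}}"

definition Delta :: "(nat \<Rightarrow> nat) \<Rightarrow> (nat \<Rightarrow> nat) \<Rightarrow> nat" where
  "Delta R R' = (LEAST n. R n \<noteq> R' n)"

definition dist00 :: "(nat \<Rightarrow> nat) \<Rightarrow> (nat \<Rightarrow> nat) \<Rightarrow> real" where
  "dist00 R R' = (if R = R' then 0 else 1 / (real (Delta R R') + 1))"

definition chronological :: "(nat list \<Rightarrow> nat list) \<Rightarrow> bool" where
  "chronological f \<longleftrightarrow>
     (\<forall>t. length (f t) = length t \<and> (\<forall>k \<le> length t. f (take k t) = take k (f t)))"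

text \<open>Induced map: fbar f R restricted to n equals f (R restricted to n).\<close>
definition fbar :: "(nat list \<Rightarrow> nat list) \<Rightarrow> (nat \<Rightarrow> nat) \<Rightarrow> (nat \<Rightarrow> nat)" where
  "fbar f R = (\<lambda>n. f (map R [0..<Suc n]) ! n)"

definition AutFL :: "(nat list \<Rightarrow> nat list) set" where
  "AutFL = {f. bij f \<and> chronological f \<and> fbar f ` c00 = c00}"

definition AutFL_group :: "(nat list \<Rightarrow> nat list) monoid" where
  "AutFL_group = \<lparr>carrier = AutFL, mult = (\<circ>), one = id\<rparr>"

definition Iso00 :: "((nat \<Rightarrow> nat) \<Rightarrow> (nat \<Rightarrow> nat)) set" where
  "Iso00 = {g. g \<in> extensional c00 \<and> bij_betw g c00 c00 \<and>
              (\<forall>R\<in>c00. \<forall>R'\<in>c00. dist00 (g R) (g R') = dist00 R R')}"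

definition Iso00_group :: "((nat \<Rightarrow> nat) \<Rightarrow> (nat \<Rightarrow> nat)) monoid" where
  "Iso00_group = \<lparr>carrier = Iso00, mult = compose c00, one = restrict id c00\<rparr>"

definition phi :: "(nat list \<Rightarrow> nat list) \<Rightarrow> ((nat \<Rightarrow> nat) \<Rightarrow> (nat \<Rightarrow> nat))" where
  "phi f = restrict (fbar f) c00"

end

theory Submission
  imports Defs
begin

(* Write R|n for init_seg R n. The distance of two sequences R, R' only records the set of n
   with R|n = R'|n. A chronological injection f satisfies (fbar f R)|n = f (R|n), so fbar f
   preserves these sets and is an isometry. Conversely, let h be an isometry of a set A that
   meets every cone {R. R|length t = t} (c00 does, via zero extensions). Then
   t \<mapsto> (h R)|length t, for any R \<in> A extending t, does not depend on the choice of R,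
   because h preserves agreement on the first length t entries; it is a chronological
   bijection inducing h on A. *)

section \<open>Initial segments and the ultrametric\<close>

definition init_seg :: "(nat \<Rightarrow> nat) \<Rightarrow> nat \<Rightarrow> nat list" where
  "init_seg R n = map R [0..<n]"

lemma length_init_seg [simp]: "length (init_seg R n) = n"
  by (simp add: init_seg_def)

lemma nth_init_seg [simp]: "i < n \<Longrightarrow> init_seg R n ! i = R i"
  by (simp add: init_seg_def)

lemma take_init_seg: "k \<le> n \<Longrightarrow> take k (init_seg R n) = init_seg R k"
  by (simp add: init_seg_def take_map)

lemma init_seg_eq_iff: "init_seg R n = init_seg R' n \<longleftrightarrow> (\<forall>i<n. R i = R' i)"
  by (auto simp: init_seg_def)

lemma all_init_seg_eq_iff: "(\<forall>n. init_seg R n = init_seg R' n) \<longleftrightarrow> R = R'"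
  by (auto simp: init_seg_eq_iff)

lemma fbar_eq_nth_init_seg: "fbar f R n = f (init_seg R (Suc n)) ! n"
  by (simp add: fbar_def init_seg_def)

lemma init_seg_eq_iff_le_Delta:
  assumes "R \<noteq> R'"
  shows "init_seg R n = init_seg R' n \<longleftrightarrow> n \<le> Delta R R'"
proof -
  from assms obtain m where "R m \<noteq> R' m" by auto
  then have "R (Delta R R') \<noteq> R' (Delta R R')"
    unfolding Delta_def by (rule LeastI)
  moreover have "R i = R' i" if "i < Delta R R'" for i
    using that not_less_Least unfolding Delta_def by blast
  ultimately show ?thesis
    by (metis init_seg_eq_iff leI order_less_le_trans)
qed

lemma agreement_set:
  "{n. init_seg R n = init_seg R' n} = (if R = R' then UNIV else {..Delta R R'})"
  by (auto simp: init_seg_eq_iff_le_Delta)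

lemma dist00_eq_iff_agreement_set_eq:
  "dist00 A B = dist00 C D \<longleftrightarrow>
     {n. init_seg A n = init_seg B n} = {n. init_seg C n = init_seg D n}"
proof -
  have "{..k} \<noteq> (UNIV :: nat set)" for k
    by (metis Suc_n_not_le_n UNIV_I atMost_iff)
  then show ?thesis
    unfolding agreement_set dist00_def by (auto simp: atMost_eq_iff)
qed

section \<open>Chronological maps\<close>

lemma chronological_length: "chronological f \<Longrightarrow> length (f t) = length t"
  by (simp add: chronological_def)

lemma chronological_take: "chronological f \<Longrightarrow> k \<le> length t \<Longrightarrow> f (take k t) = take k (f t)"
  by (simp add: chronological_def)

lemma chronological_id: "chronological id"
  by (simp add: chronological_def)

lemma chronological_comp:
  "chronological f \<Longrightarrow> chronological g \<Longrightarrow> chronological (f \<circ> g)"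
  by (simp add: chronological_def)

lemma chronological_inv:
  assumes "bij f" and f: "chronological f"
  shows "chronological (inv_into UNIV f)"
  unfolding chronological_def
proof (intro allI conjI impI)
  fix t k
  have f_inv: "f (inv_into UNIV f t) = t"
    using assms by (simp add: bij_is_surj surj_f_inv_f)
  then show "length (inv_into UNIV f t) = length t"
    by (metis chronological_length[OF f])
  assume "k \<le> length t"
  then have "f (take k (inv_into UNIV f t)) = take k t"
    by (metis f_inv chronological_length[OF f] chronological_take[OF f])
  then show "inv_into UNIV f (take k t) = take k (inv_into UNIV f t)"
    by (metis assms(1) bij_is_inj inv_f_f)
qed

lemma init_seg_fbar:
  assumes f: "chronological f"
  shows "init_seg (fbar f R) n = f (init_seg R n)"
proof (rule nth_equalityI)
  show "length (init_seg (fbar f R) n) = length (f (init_seg R n))"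
    by (simp add: chronological_length[OF f])
next
  fix i assume "i < length (init_seg (fbar f R) n)"
  then have "i < n" by simp
  then have "f (init_seg R (Suc i)) = take (Suc i) (f (init_seg R n))"
    by (metis Suc_leI length_init_seg take_init_seg chronological_take[OF f])
  with \<open>i < n\<close> show "init_seg (fbar f R) n ! i = f (init_seg R n) ! i"
    by (simp add: fbar_eq_nth_init_seg)
qed

lemma fbar_id: "fbar id = id"
  by (simp add: fun_eq_iff fbar_eq_nth_init_seg)

lemma fbar_comp: "chronological g \<Longrightarrow> fbar (f \<circ> g) = fbar f \<circ> fbar g"
  by (simp add: fun_eq_iff fbar_eq_nth_init_seg init_seg_fbar)

lemma fbar_inv_comp:
  assumes "bij f" "chronological f"
  shows "fbar (inv_into UNIV f) \<circ> fbar f = id"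
  by (metis assms bij_is_inj fbar_comp fbar_id inv_o_cancel)

lemma inj_fbar: "bij f \<Longrightarrow> chronological f \<Longrightarrow> inj (fbar f)"
  by (metis fbar_inv_comp inj_on_id inj_on_imageI2)

lemma dist00_fbar:
  assumes "inj f" "chronological f"
  shows "dist00 (fbar f R) (fbar f R') = dist00 R R'"
  using assms by (simp add: dist00_eq_iff_agreement_set_eq init_seg_fbar inj_eq)

definition dense_seq_set :: "(nat \<Rightarrow> nat) set \<Rightarrow> bool" where
  "dense_seq_set A \<longleftrightarrow> (\<forall>t. \<exists>R\<in>A. init_seg R (length t) = t)"

lemma dense_seq_set_c00: "dense_seq_set c00"
  unfolding dense_seq_set_def
proof
  fix t :: "nat list"
  define R where "R i = (if i < length t then t ! i else 0)" for i
  have "{n. R n \<noteq> 0} \<subseteq> {..<length t}"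
    by (auto simp: R_def)
  then have "R \<in> c00"
    unfolding c00_def using finite_subset by blast
  moreover have "init_seg R (length t) = t"
    by (rule nth_equalityI) (simp_all add: R_def)
  ultimately show "\<exists>R\<in>c00. init_seg R (length t) = t" by blast
qed

lemma chronological_eqI:
  assumes "chronological f" "chronological g" "dense_seq_set A"
    and "\<And>R. R \<in> A \<Longrightarrow> fbar f R = fbar g R"
  shows "f = g"
proof
  fix t
  from \<open>dense_seq_set A\<close> obtain R where "R \<in> A" "init_seg R (length t) = t"
    unfolding dense_seq_set_def by blast
  then show "f t = g t"
    by (metis assms(1,2,4) init_seg_fbar)
qed

definition game_aut :: "(nat \<Rightarrow> nat) set \<Rightarrow> (nat list \<Rightarrow> nat list) set" where
  "game_aut A = {f. bij f \<and> chronological f \<and> fbar f ` A = A}"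

definition game_aut_group :: "(nat \<Rightarrow> nat) set \<Rightarrow> (nat list \<Rightarrow> nat list) monoid" where
  "game_aut_group A = \<lparr>carrier = game_aut A, mult = (\<circ>), one = id\<rparr>"

lemma game_autD:
  assumes "f \<in> game_aut A"
  shows "bij f" "chronological f" "fbar f ` A = A"
  using assms by (auto simp: game_aut_def)

lemma comp_game_aut:
  assumes "f \<in> game_aut A" "g \<in> game_aut A"
  shows "f \<circ> g \<in> game_aut A"
proof -
  have "fbar (f \<circ> g) ` A = fbar f ` fbar g ` A"
    by (simp add: fbar_comp game_autD(2)[OF assms(2)] image_comp)
  then show ?thesis
    using game_autD[OF assms(1)] game_autD[OF assms(2)]
    by (simp add: game_aut_def bij_comp chronological_comp)
qed

lemma inv_game_aut:
  assumes "f \<in> game_aut A"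
  shows "inv_into UNIV f \<in> game_aut A"
proof -
  note f = game_autD[OF assms]
  have "fbar (inv_into UNIV f) ` A = (fbar (inv_into UNIV f) \<circ> fbar f) ` A"
    by (metis f(3) image_comp)
  with f show ?thesis
    by (simp add: game_aut_def fbar_inv_comp bij_imp_bij_inv chronological_inv)
qed

lemma group_game_aut_group: "group (game_aut_group A)"
proof (rule groupI)
  show "\<one>\<^bsub>game_aut_group A\<^esub> \<in> carrier (game_aut_group A)"
    by (simp add: game_aut_group_def game_aut_def chronological_id fbar_id)
next
  fix f assume "f \<in> carrier (game_aut_group A)"
  then have "f \<in> game_aut A" by (simp add: game_aut_group_def)
  moreover from this have "inv_into UNIV f \<circ> f = id"
    by (simp add: game_autD(1) bij_is_inj)
  ultimately show "\<exists>g\<in>carrier (game_aut_group A). g \<otimes>\<^bsub>game_aut_group A\<^esub> f = \<one>\<^bsub>game_aut_group A\<^esub>"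
    by (auto simp: game_aut_group_def intro: inv_game_aut)
qed (simp_all add: game_aut_group_def comp_game_aut o_assoc)

definition isometries :: "'a set \<Rightarrow> ('a \<Rightarrow> 'a \<Rightarrow> 'b) \<Rightarrow> ('a \<Rightarrow> 'a) set" where
  "isometries S d = {g. g \<in> extensional S \<and> bij_betw g S S \<and> (\<forall>x\<in>S. \<forall>y\<in>S. d (g x) (g y) = d x y)}"

definition isometry_group :: "'a set \<Rightarrow> ('a \<Rightarrow> 'a \<Rightarrow> 'b) \<Rightarrow> ('a \<Rightarrow> 'a) monoid" where
  "isometry_group S d = \<lparr>carrier = isometries S d, mult = compose S, one = restrict id S\<rparr>"

lemma isometriesD:
  assumes "g \<in> isometries S d"
  shows "g \<in> extensional S" "bij_betw g S S" "\<And>x y. x \<in> S \<Longrightarrow> y \<in> S \<Longrightarrow> d (g x) (g y) = d x y"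
  using assms by (auto simp: isometries_def)

lemma isometries_funcset: "g \<in> isometries S d \<Longrightarrow> g \<in> S \<rightarrow> S"
  using isometriesD(2) bij_betwE by blast

lemma compose_isometries:
  assumes "g \<in> isometries S d" "h \<in> isometries S d"
  shows "compose S g h \<in> isometries S d"
proof -
  note g = isometriesD[OF assms(1)] and h = isometriesD[OF assms(2)]
  have "d (g (h x)) (g (h y)) = d x y" if "x \<in> S" "y \<in> S" for x y
    using that g(3) h(3) isometries_funcset[OF assms(2)] by (simp add: Pi_iff)
  then show ?thesis
    using g(2) h(2) by (simp add: isometries_def bij_betw_compose compose_eq)
qed

lemma inv_isometries:
  assumes "g \<in> isometries S d"
  shows "restrict (inv_into S g) S \<in> isometries S d"
    and "compose S (restrict (inv_into S g) S) g = restrict id S"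
proof -
  note g = isometriesD[OF assms]
  have inv_in: "inv_into S g x \<in> S" and g_inv: "g (inv_into S g x) = x" if "x \<in> S" for x
    using g(2) that by (auto simp: bij_betw_inv_into_right bij_betwE[OF bij_betw_inv_into])
  have "d (inv_into S g x) (inv_into S g y) = d x y" if "x \<in> S" "y \<in> S" for x y
    using g(3)[OF inv_in[OF that(1)] inv_in[OF that(2)]] by (simp add: g_inv that)
  then show "restrict (inv_into S g) S \<in> isometries S d"
    using bij_betw_inv_into[OF g(2)] by (simp add: isometries_def cong: bij_betw_cong)
  show "compose S (restrict (inv_into S g) S) g = restrict id S"
    using g(2) isometries_funcset[OF assms]
    by (auto simp: compose_def fun_eq_iff bij_betw_imp_inj_on)
qed

lemma group_isometry_group: "group (isometry_group S d)"
proof (rule groupI)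
  fix g assume "g \<in> carrier (isometry_group S d)"
  then show "\<exists>h\<in>carrier (isometry_group S d). h \<otimes>\<^bsub>isometry_group S d\<^esub> g = \<one>\<^bsub>isometry_group S d\<^esub>"
    using inv_isometries by (fastforce simp: isometry_group_def)
next
  fix g assume "g \<in> carrier (isometry_group S d)"
  then show "\<one>\<^bsub>isometry_group S d\<^esub> \<otimes>\<^bsub>isometry_group S d\<^esub> g = g"
    by (simp add: isometry_group_def Id_compose[unfolded id_def[symmetric]]
        isometries_funcset isometriesD(1))
next
  fix f g h assume "h \<in> carrier (isometry_group S d)"
  then show "f \<otimes>\<^bsub>isometry_group S d\<^esub> g \<otimes>\<^bsub>isometry_group S d\<^esub> h =
      f \<otimes>\<^bsub>isometry_group S d\<^esub> (g \<otimes>\<^bsub>isometry_group S d\<^esub> h)"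
    by (simp add: isometry_group_def compose_assoc[OF isometries_funcset])
next
  show "\<one>\<^bsub>isometry_group S d\<^esub> \<in> carrier (isometry_group S d)"
    by (simp add: isometry_group_def isometries_def bij_betw_def inj_on_def)
qed (simp add: isometry_group_def compose_isometries)

section \<open>Isometries of the ultrametric come from chronological bijections\<close>

lemma isometries_dist00_agree:
  assumes "h \<in> isometries A dist00" "R \<in> A" "R' \<in> A"
  shows "init_seg (h R) n = init_seg (h R') n \<longleftrightarrow> init_seg R n = init_seg R' n"
  using isometriesD(3)[OF assms] by (simp add: dist00_eq_iff_agreement_set_eq set_eq_iff)

definition tree_map ::
  "((nat \<Rightarrow> nat) \<Rightarrow> nat \<Rightarrow> nat) \<Rightarrow> (nat list \<Rightarrow> nat \<Rightarrow> nat) \<Rightarrow> nat list \<Rightarrow> nat list" where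
  "tree_map h ext t = init_seg (h (ext t)) (length t)"

context
  fixes A :: "(nat \<Rightarrow> nat) set" and h :: "(nat \<Rightarrow> nat) \<Rightarrow> nat \<Rightarrow> nat"
    and ext :: "nat list \<Rightarrow> nat \<Rightarrow> nat"
  assumes ext_mem: "\<And>t. ext t \<in> A"
    and init_seg_ext: "\<And>t. init_seg (ext t) (length t) = t"
    and h_agree: "\<And>R R' n. R \<in> A \<Longrightarrow> R' \<in> A \<Longrightarrow>
      init_seg (h R) n = init_seg (h R') n \<longleftrightarrow> init_seg R n = init_seg R' n"
begin

lemma tree_map_init_seg:
  assumes "R \<in> A"
  shows "tree_map h ext (init_seg R n) = init_seg (h R) n"
proof -
  have "init_seg (ext (init_seg R n)) n = init_seg R n"
    using init_seg_ext[of "init_seg R n"] by simp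
  then show ?thesis
    by (simp add: tree_map_def h_agree[OF ext_mem assms])
qed

lemma chronological_tree_map: "chronological (tree_map h ext)"
  unfolding chronological_def
proof (intro allI conjI impI)
  fix t :: "nat list" and k assume "k \<le> length t"
  then have "take k (tree_map h ext t) = init_seg (h (ext t)) k"
    by (simp add: tree_map_def take_init_seg)
  also have "\<dots> = tree_map h ext (init_seg (ext t) k)"
    by (simp add: tree_map_init_seg ext_mem)
  also have "init_seg (ext t) k = take k t"
    using \<open>k \<le> length t\<close> by (metis init_seg_ext take_init_seg)
  finally show "tree_map h ext (take k t) = take k (tree_map h ext t)" ..
qed (simp add: tree_map_def)

lemma fbar_tree_map: "R \<in> A \<Longrightarrow> fbar (tree_map h ext) R = h R"
  by (metis all_init_seg_eq_iff chronological_tree_map init_seg_fbar tree_map_init_seg)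

lemma inj_tree_map: "inj (tree_map h ext)"
proof (rule injI)
  fix t t' assume eq: "tree_map h ext t = tree_map h ext t'"
  then have "length t = length t'"
    by (metis chronological_length chronological_tree_map)
  with eq have "init_seg (ext t) (length t) = init_seg (ext t') (length t')"
    by (simp add: tree_map_def h_agree[OF ext_mem ext_mem])
  then show "t = t'"
    by (simp add: init_seg_ext)
qed

lemma surj_tree_map:
  assumes "A \<subseteq> h ` A"
  shows "surj (tree_map h ext)"
  unfolding surj_def
proof
  fix s
  from assms ext_mem obtain R where "R \<in> A" "ext s = h R" by blast
  then have "tree_map h ext (init_seg R (length s)) = s"
    by (metis init_seg_ext tree_map_init_seg)
  then show "\<exists>t. s = tree_map h ext t" by metis
qed

end

lemma restrict_fbar_isometries:
  assumes "f \<in> game_aut A"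
  shows "restrict (fbar f) A \<in> isometries A dist00"
proof -
  note f = game_autD[OF assms]
  have "bij_betw (fbar f) A A"
    unfolding bij_betw_def using inj_on_subset[OF inj_fbar[OF f(1,2)] subset_UNIV] f(3) by simp
  then show ?thesis
    by (simp add: isometries_def dist00_fbar f(1,2) bij_is_inj cong: bij_betw_cong)
qed

lemma restrict_fbar_surj:
  assumes "dense_seq_set A" "h \<in> isometries A dist00"
  obtains f where "f \<in> game_aut A" "restrict (fbar f) A = h"
proof -
  from assms(1) obtain ext where ext: "\<And>t. ext t \<in> A" "\<And>t. init_seg (ext t) (length t) = t"
    unfolding dense_seq_set_def by metis
  note h = isometriesD[OF assms(2)]
  note agree = isometries_dist00_agree[OF assms(2)]
  define f where "f = tree_map h ext"
  have fbar_f: "fbar f R = h R" if "R \<in> A" for R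
    unfolding f_def using fbar_tree_map[OF ext agree that] .
  have "h ` A = A"
    using h(2) by (simp add: bij_betw_def)
  then have "fbar f ` A = A"
    by (simp add: fbar_f cong: image_cong)
  moreover have "bij f"
    using inj_tree_map[OF ext agree] surj_tree_map[OF ext agree] \<open>h ` A = A\<close>
    by (simp add: f_def bij_def)
  ultimately have "f \<in> game_aut A"
    by (simp add: game_aut_def f_def chronological_tree_map[OF ext agree])
  moreover have "restrict (fbar f) A = h"
    using h(1) by (simp add: fun_eq_iff fbar_f extensional_def)
  ultimately show ?thesis by (rule that)
qed

lemma restrict_fbar_comp:
  assumes "g \<in> game_aut A"
  shows "restrict (fbar (f \<circ> g)) A = compose A (restrict (fbar f) A) (restrict (fbar g) A)"
proof -
  have "fbar g R \<in> A" if "R \<in> A" for R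
    using that game_autD(3)[OF assms] by blast
  then show ?thesis
    by (auto simp: compose_def fun_eq_iff fbar_comp game_autD(2)[OF assms])
qed

theorem restrict_fbar_iso:
  assumes "dense_seq_set A"
  shows "(\<lambda>f. restrict (fbar f) A) \<in> iso (game_aut_group A) (isometry_group A dist00)"
proof -
  have hom: "(\<lambda>f. restrict (fbar f) A) \<in> hom (game_aut_group A) (isometry_group A dist00)"
    by (rule homI) (simp_all add: game_aut_group_def isometry_group_def
        restrict_fbar_isometries restrict_fbar_comp)
  have "inj_on (\<lambda>f. restrict (fbar f) A) (game_aut A)"
    by (rule inj_onI) (metis assms chronological_eqI game_autD(2) restrict_apply')
  moreover have "(\<lambda>f. restrict (fbar f) A) ` game_aut A = isometries A dist00"
  proof (intro subset_antisym image_subsetI subsetI)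
    fix h assume "h \<in> isometries A dist00"
    then obtain f where "f \<in> game_aut A" "restrict (fbar f) A = h"
      by (rule restrict_fbar_surj[OF assms])
    then show "h \<in> (\<lambda>f. restrict (fbar f) A) ` game_aut A" by blast
  qed (rule restrict_fbar_isometries)
  ultimately show ?thesis
    using hom by (simp add: iso_def bij_betw_def game_aut_group_def isometry_group_def)
qed

theorem mainTheorem19:
  shows "group AutFL_group \<and> group Iso00_group \<and>
         (\<forall>f\<in>AutFL. phi f \<in> Iso00) \<and>
         phi \<in> iso AutFL_group Iso00_group"
proof -
  have AutFL: "AutFL = game_aut c00" "AutFL_group = game_aut_group c00"
    by (simp_all add: AutFL_def game_aut_def AutFL_group_def game_aut_group_def)
  have Iso00: "Iso00 = isometries c00 dist00" "Iso00_group = isometry_group c00 dist00"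
    by (simp_all add: Iso00_def isometries_def Iso00_group_def isometry_group_def)
  have phi: "phi = (\<lambda>f. restrict (fbar f) c00)"
    by (simp add: fun_eq_iff phi_def)
  show ?thesis
    unfolding AutFL Iso00 phi
    by (simp add: group_game_aut_group group_isometry_group restrict_fbar_isometries
        restrict_fbar_iso dense_seq_set_c00)
qed

end
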